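(* Let $m>1$ and let $T$ be a regular tournament matrix of order $m$. Put $N=T\otimes J_2+I_{2m}$. Let $H$ be a regular graph of order $2m$ with vertex set $X$, having an automorphism $\rho$ that is a fixed-point-free involution, such that the orbits of the full automorphism group of $H$ on $X$ are exactly the orbits of $\rho$. Let $B$ be the adjacency matrix of $H$, with vertices indexed so that $\rho$ is represented by the permutation matrix $R=I_m\otimes(J_2-I_2)$. Let $G$ be the graph on the disjoint union of two copies $X_1,X_2$ of $X$ with adjacency matrix \[ A=\begin{bmatrix} B & N\\ N^{\top} & B\end{bmatrix} \] (the first block row/column indexed by $X_1$, the second by $X_2$). Then $X_1$ is a Godsil-McKay switching set of $G$, the graph $G'$ obtained by Godsil-McKay switching with respect to $X_1$ is isomorphic to $G$, and there is no isomorphism from $G$ to $G'$ that maps $X_1$ onto itself.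
   Context: A $(0,1)$-matrix $T$ of order $m$ is a tournament matrix if $T+T^{\top}=J-I$; it is regular if all its row sums are equal. $J_2$ is the $2\times 2$ all-ones matrix, $I_k$ the $k\times k$ identity, and $\otimes$ the Kronecker product. A subset $X$ of the vertex set of a graph $G$ is a (Godsil-McKay) switching set if $X$ induces a regular subgraph of $G$ and every vertex outside $X$ has either $0$, $\tfrac12|X|$ or $|X|$ neighbours in $X$. Godsil-McKay switching with respect to $X$ produces the graph $G'$ on the same vertex set obtained as follows: for each vertex $x\notin X$ having exactly $\tfrac12|X|$ neighbours in $X$, delete the edges from $x$ to these neighbours and join $x$ instead to the other $\tfrac12|X|$ vertices of $X$; all other adjacencies are unchanged. *)

theory Defs
  imports Main
begin

text \<open>Square matrices of order n are represented as functions nat \<Rightarrow> nat \<Rightarrow> int,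
  indices 0..<n. Only entries with indices below the order are meaningful.\<close>

definition all_ones :: "nat \<Rightarrow> nat \<Rightarrow> int" where
  "all_ones i j = 1"

definition id_mat :: "nat \<Rightarrow> nat \<Rightarrow> int" where
  "id_mat i j = (if i = j then 1 else 0)"

definition kron :: "nat \<Rightarrow> (nat \<Rightarrow> nat \<Rightarrow> int) \<Rightarrow> (nat \<Rightarrow> nat \<Rightarrow> int) \<Rightarrow> nat \<Rightarrow> nat \<Rightarrow> int" where
  "kron k A B i j = A (i div k) (j div k) * B (i mod k) (j mod k)"

definition tournament_matrix :: "nat \<Rightarrow> (nat \<Rightarrow> nat \<Rightarrow> int) \<Rightarrow> bool" where
  "tournament_matrix m T \<longleftrightarrow>
     (\<forall>i<m. \<forall>j<m. T i j \<in> {0, 1}) \<and>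
     (\<forall>i<m. \<forall>j<m. T i j + T j i = all_ones i j - id_mat i j)"

definition regular_matrix :: "nat \<Rightarrow> (nat \<Rightarrow> nat \<Rightarrow> int) \<Rightarrow> bool" where
  "regular_matrix m T \<longleftrightarrow> (\<exists>r. \<forall>i<m. (\<Sum>j<m. T i j) = r)"

definition adjacency_matrix :: "nat \<Rightarrow> (nat \<Rightarrow> nat \<Rightarrow> int) \<Rightarrow> bool" where
  "adjacency_matrix n B \<longleftrightarrow>
     (\<forall>i<n. \<forall>j<n. B i j \<in> {0, 1}) \<and> (\<forall>i<n. \<forall>j<n. B i j = B j i) \<and> (\<forall>i<n. B i i = 0)"

definition mat_graph :: "(nat \<Rightarrow> nat \<Rightarrow> int) \<Rightarrow> nat \<Rightarrow> nat \<Rightarrow> bool" where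
  "mat_graph A u v \<longleftrightarrow> A u v = 1"

definition regular_graph :: "'a set \<Rightarrow> ('a \<Rightarrow> 'a \<Rightarrow> bool) \<Rightarrow> bool" where
  "regular_graph V E \<longleftrightarrow> (\<exists>k. \<forall>x\<in>V. card {y\<in>V. E x y} = k)"

definition graph_iso :: "'a set \<Rightarrow> ('a \<Rightarrow> 'a \<Rightarrow> bool) \<Rightarrow> 'b set \<Rightarrow> ('b \<Rightarrow> 'b \<Rightarrow> bool) \<Rightarrow> ('a \<Rightarrow> 'b) \<Rightarrow> bool" where
  "graph_iso V E V' E' f \<longleftrightarrow> bij_betw f V V' \<and> (\<forall>u\<in>V. \<forall>v\<in>V. E u v \<longleftrightarrow> E' (f u) (f v))"

definition graph_aut :: "'a set \<Rightarrow> ('a \<Rightarrow> 'a \<Rightarrow> bool) \<Rightarrow> ('a \<Rightarrow> 'a) \<Rightarrow> bool" where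
  "graph_aut V E f \<longleftrightarrow> graph_iso V E V E f"

definition gm_switching_set :: "'a set \<Rightarrow> ('a \<Rightarrow> 'a \<Rightarrow> bool) \<Rightarrow> 'a set \<Rightarrow> bool" where
  "gm_switching_set V E X \<longleftrightarrow> X \<subseteq> V \<and> regular_graph X E \<and>
     (\<forall>v\<in>V - X. card {y\<in>X. E v y} = 0 \<or> 2 * card {y\<in>X. E v y} = card X
                 \<or> card {y\<in>X. E v y} = card X)"

definition gm_switch :: "'a set \<Rightarrow> ('a \<Rightarrow> 'a \<Rightarrow> bool) \<Rightarrow> 'a set \<Rightarrow> 'a \<Rightarrow> 'a \<Rightarrow> bool" where
  "gm_switch V E X u v =
     (if u \<in> V - X \<and> v \<in> X \<and> 2 * card {y\<in>X. E u y} = card X then \<not> E u v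
      else if v \<in> V - X \<and> u \<in> X \<and> 2 * card {y\<in>X. E v y} = card X then \<not> E u v
      else E u v)"

definition block_mat :: "nat \<Rightarrow> (nat \<Rightarrow> nat \<Rightarrow> int) \<Rightarrow> (nat \<Rightarrow> nat \<Rightarrow> int) \<Rightarrow>
    (nat \<Rightarrow> nat \<Rightarrow> int) \<Rightarrow> (nat \<Rightarrow> nat \<Rightarrow> int) \<Rightarrow> nat \<Rightarrow> nat \<Rightarrow> int" where
  "block_mat n P Q Q' S i j =
     (if i < n then (if j < n then P i j else Q i (j - n))
      else (if j < n then Q' (i - n) j else S (i - n) (j - n)))"

definition transp_mat :: "(nat \<Rightarrow> nat \<Rightarrow> int) \<Rightarrow> nat \<Rightarrow> nat \<Rightarrow> int" where
  "transp_mat A i j = A j i"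

end

theory Submission
  imports Defs
begin

text \<open>A regular tournament of order m has all column sums (m - 1)/2, so every column of
  N = T \<otimes> J2 + I has exactly m ones: each vertex of X2 sees half of X1, and switching
  complements exactly the edges between X1 and X2, replacing N by J - N. Because \<rho> swaps
  the two vertices of each pair {2k, 2k+1}, the tournament property gives
  (J - N) u w = N (\<rho> w) u; hence mapping X1 identically onto X2 and X2 onto X1 via \<rho> is
  an isomorphism G \<rightarrow> G'. An isomorphism fixing X1 would restrict to automorphisms \<sigma>, \<tau>
  of H on the two halves with N (\<sigma> u) (\<tau> v) \<noteq> N u v. But automorphisms of H preserve
  the pairs, and between two different pairs N is constant, equal to an entry of T.\<close>

lemma tournament_matrix_diag:
  assumes "tournament_matrix m T" "i < m"
  shows "T i i = 0"
  using assms unfolding tournament_matrix_def all_ones_def id_mat_def by force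

lemma tournament_matrix_01:
  assumes "tournament_matrix m T" "i < m" "j < m"
  shows "T i j = 0 \<or> T i j = 1"
  using assms unfolding tournament_matrix_def by force

lemma tournament_matrix_antisym:
  assumes "tournament_matrix m T" "i < m" "j < m" "i \<noteq> j"
  shows "T j i = 1 - T i j"
  using assms unfolding tournament_matrix_def all_ones_def id_mat_def by force

lemma tournament_matrix_score_plus_loss:
  assumes "tournament_matrix m T" "i < m"
  shows "(\<Sum>j<m. T i j + T j i) = int m - 1"
proof -
  have "(\<Sum>j<m. T i j + T j i) = (\<Sum>j<m. 1 - (if i = j then 1 else 0))"
    using assms unfolding tournament_matrix_def all_ones_def id_mat_def by (intro sum.cong) auto
  also have "\<dots> = int m - 1"
    using assms(2) by (simp add: sum_subtractf)
  finally show ?thesis .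
qed

lemma regular_tournament_row_sum:
  assumes "tournament_matrix m T" "regular_matrix m T" "i < m"
  shows "2 * (\<Sum>j<m. T i j) = int m - 1"
proof -
  obtain r where r: "\<And>i. i < m \<Longrightarrow> (\<Sum>j<m. T i j) = r"
    using assms(2) unfolding regular_matrix_def by blast
  have "int m * (int m - 1) = (\<Sum>i<m. \<Sum>j<m. T i j + T j i)"
    using tournament_matrix_score_plus_loss[OF assms(1)] by simp
  also have "\<dots> = 2 * (\<Sum>i<m. \<Sum>j<m. T i j)"
    by (simp add: sum.distrib sum.swap[of "\<lambda>i j. T j i"])
  also have "\<dots> = int m * (2 * r)"
    using r by simp
  finally have "int m - 1 = 2 * r"
    using assms(3) by simp
  with r assms(3) show ?thesis by simp
qed

lemma regular_tournament_column_sum: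
  assumes "tournament_matrix m T" "regular_matrix m T" "j < m"
  shows "2 * (\<Sum>i<m. T i j) = int m - 1"
  using tournament_matrix_score_plus_loss[OF assms(1,3)] regular_tournament_row_sum[OF assms]
  by (simp add: sum.distrib)

lemma sum_lessThan_double_div2:
  fixes f :: "nat \<Rightarrow> 'a::comm_semiring_1"
  shows "(\<Sum>y<2*n. f (y div 2)) = 2 * (\<Sum>k<n. f k)"
  by (induction n) (simp_all add: algebra_simps mult_2_right)

lemma div2_eq_cases:
  fixes a b c :: nat
  assumes "a div 2 = c div 2" "b div 2 = c div 2" "b \<noteq> c"
  shows "a = c \<or> a = b"
  using assms by (metis div_mult_mod_eq less_2_cases mod_less_divisor zero_less_numeral)

lemma kron_id_swap:
  "kron 2 id_mat (\<lambda>i j. all_ones i j - id_mat i j) i j =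
     (if i div 2 = j div 2 \<and> i \<noteq> j then 1 else 0)"
proof -
  have "i = j \<longleftrightarrow> i div 2 = j div 2 \<and> i mod 2 = j mod 2"
    by (metis div_mult_mod_eq)
  then show ?thesis
    by (auto simp: kron_def id_mat_def all_ones_def)
qed

lemma kron_id_swap_div2:
  assumes "\<forall>i<n. \<forall>j<n.
      kron 2 id_mat (\<lambda>i j. all_ones i j - id_mat i j) i j = (if \<rho> i = j then 1 else 0)"
    and "x < n" "\<rho> x < n"
  shows "\<rho> x div 2 = x div 2"
proof -
  from assms have "kron 2 id_mat (\<lambda>i j. all_ones i j - id_mat i j) x (\<rho> x) = 1"
    by simp
  then show ?thesis
    by (simp add: kron_id_swap split: if_splits)
qed

definition doubled_tournament :: "(nat \<Rightarrow> nat \<Rightarrow> int) \<Rightarrow> nat \<Rightarrow> nat \<Rightarrow> int" where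
  "doubled_tournament T i j = T (i div 2) (j div 2) + (if i = j then 1 else 0)"

lemma kron_all_ones_plus_id:
  "(\<lambda>i j. kron 2 T all_ones i j + id_mat i j) = doubled_tournament T"
  by (simp add: fun_eq_iff kron_def all_ones_def id_mat_def doubled_tournament_def)

lemma card_doubled_tournament_column:
  assumes "tournament_matrix m T" "regular_matrix m T" "b < 2*m"
  shows "card {y\<in>{0..<2*m}. doubled_tournament T y b = 1} = m"
proof -
  let ?N = "doubled_tournament T"
  have bm: "b div 2 < m" using assms(3) by simp
  have N01: "(if ?N y b = 1 then 1 else 0) = ?N y b" if "y < 2*m" for y
    using tournament_matrix_diag[OF assms(1) bm] tournament_matrix_01[OF assms(1) _ bm, of "y div 2"] that
    by (auto simp: doubled_tournament_def)
  have "int (card {y\<in>{0..<2*m}. ?N y b = 1}) = (\<Sum>y<2*m. if ?N y b = 1 then 1 else 0)"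
    by (simp add: sum.If_cases atLeast0LessThan Int_def conj_commute)
  also have "\<dots> = (\<Sum>y<2*m. ?N y b)"
    using N01 by (intro sum.cong) auto
  also have "\<dots> = (\<Sum>y<2*m. T (y div 2) (b div 2)) + 1"
    using assms(3) by (simp add: doubled_tournament_def sum.distrib)
  also have "\<dots> = int m"
    using sum_lessThan_double_div2[of "\<lambda>k. T k (b div 2)" m]
      regular_tournament_column_sum[OF assms(1,2) bm] by simp
  finally show ?thesis by simp
qed

lemma doubled_tournament_pair_swap:
  assumes T: "tournament_matrix m T" and u: "u < 2*m" and w: "w < 2*m"
    and pair: "w' div 2 = w div 2" "w' \<noteq> w"
  shows "doubled_tournament T u w = 1 \<longleftrightarrow> doubled_tournament T w' u \<noteq> 1"
proof (cases "u div 2 = w div 2")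
  case True
  then have "u = w \<or> u = w'"
    using div2_eq_cases pair by blast
  with True pair tournament_matrix_diag[OF T, of "w div 2"] w show ?thesis
    by (auto simp: doubled_tournament_def)
next
  case False
  with u w pair tournament_matrix_antisym[OF T, of "u div 2" "w div 2"]
    tournament_matrix_01[OF T, of "u div 2" "w div 2"] show ?thesis
    by (auto simp: doubled_tournament_def)
qed

lemma block_mat_simps [simp]:
  "i < n \<Longrightarrow> j < n \<Longrightarrow> block_mat n P Q Q' S i j = P i j"
  "i < n \<Longrightarrow> block_mat n P Q Q' S i (j + n) = Q i j"
  "j < n \<Longrightarrow> block_mat n P Q Q' S (i + n) j = Q' i j"
  "block_mat n P Q Q' S (i + n) (j + n) = S i j"
  by (simp_all add: block_mat_def)

lemma less_double_cases [consumes 1, case_names low high]: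
  fixes x n :: nat
  assumes "x < 2*n"
  obtains "x < n" | y where "y < n" "x = y + n"
  using assms by (metis add.commute le_add_diff_inverse2 mult_2 nat_add_left_cancel_less not_less)

definition cross_complement :: "'a set \<Rightarrow> ('a \<Rightarrow> 'a \<Rightarrow> bool) \<Rightarrow> 'a \<Rightarrow> 'a \<Rightarrow> bool" where
  "cross_complement X E u v = (if (u \<in> X) \<noteq> (v \<in> X) then \<not> E u v else E u v)"

lemma gm_switch_halved:
  assumes "\<forall>v\<in>V - X. 2 * card {y\<in>X. E v y} = card X" "u \<in> V" "v \<in> V"
  shows "gm_switch V E X u v = cross_complement X E u v"
  using assms unfolding gm_switch_def cross_complement_def by auto

lemma graph_iso_cong:
  assumes "\<forall>u\<in>V'. \<forall>v\<in>V'. E1 u v = E2 u v"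
  shows "graph_iso V E V' E1 f = graph_iso V E V' E2 f"
  using assms unfolding graph_iso_def bij_betw_def by auto

lemma graph_aut_lessThan:
  fixes n :: nat
  assumes "graph_aut {0..<n} E \<sigma>" "u < n"
  shows "\<sigma> u < n"
proof -
  have "bij_betw \<sigma> {0..<n} {0..<n}"
    using assms(1) unfolding graph_aut_def graph_iso_def by blast
  from bij_betw_apply[OF this] assms(2) show ?thesis by simp
qed

lemma graph_aut_mat_graph_edge:
  fixes n :: nat
  assumes "graph_aut {0..<n} (mat_graph B) \<sigma>" "u < n" "v < n"
  shows "B (\<sigma> u) (\<sigma> v) = 1 \<longleftrightarrow> B u v = 1"
  using assms unfolding graph_aut_def graph_iso_def mat_graph_def by simp

lemma graph_aut_preserves_pairs:
  fixes n :: nat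
  assumes orbits: "\<forall>x<n. \<forall>y<n.
      (\<exists>\<sigma>. graph_aut {0..<n} E \<sigma> \<and> \<sigma> x = y) \<longleftrightarrow> (y = x \<or> y = \<rho> x)"
    and pair: "\<And>x. x < n \<Longrightarrow> \<rho> x div 2 = x div 2"
    and aut: "graph_aut {0..<n} E \<sigma>" and x: "x < n"
  shows "\<sigma> x div 2 = x div 2"
proof -
  have "\<sigma> x = x \<or> \<sigma> x = \<rho> x"
    using orbits graph_aut_lessThan[OF aut x] aut x by blast
  with pair[OF x] show ?thesis by auto
qed

lemma block_graph_cross_complement_iso:
  fixes n :: nat and B Q :: "nat \<Rightarrow> nat \<Rightarrow> int"
  defines "E \<equiv> mat_graph (block_mat n B Q (transp_mat Q) B)"
  assumes aut: "graph_aut {0..<n} (mat_graph B) \<rho>"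
    and inv: "\<forall>x<n. \<rho> (\<rho> x) = x"
    and swap: "\<forall>u<n. \<forall>w<n. Q u w = 1 \<longleftrightarrow> Q (\<rho> w) u \<noteq> 1"
  shows "graph_iso {0..<2*n} E {0..<2*n} (cross_complement {0..<n} E)
           (\<lambda>x. if x < n then x + n else \<rho> (x - n))"
    (is "graph_iso ?V E ?V ?E' ?f")
proof -
  note \<rho>_lt = graph_aut_lessThan[OF aut]
  have f_low: "?f u = u + n" if "u < n" for u
    using that by simp
  have f_high: "?f (u + n) = \<rho> u" for u
    by simp
  have "bij_betw ?f ?V ?V"
    by (rule bij_betw_byWitness[where f' = "\<lambda>y. if y < n then \<rho> y + n else y - n"])
       (use inv \<rho>_lt in \<open>fastforce elim!: less_double_cases\<close>)+
  moreover have "E u v = ?E' (?f u) (?f v)" if "u \<in> ?V" "v \<in> ?V" for u v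
  proof -
    have low_low: "E u v = ?E' (u + n) (v + n)"
      and low_high: "E u (v + n) = ?E' (u + n) (\<rho> v)"
      and high_low: "E (u + n) v = ?E' (\<rho> u) (v + n)"
      and high_high: "E (u + n) (v + n) = ?E' (\<rho> u) (\<rho> v)"
      if "u < n" "v < n" for u v
      using that swap \<rho>_lt graph_aut_mat_graph_edge[OF aut]
      by (simp_all add: E_def cross_complement_def mat_graph_def transp_mat_def)
    from that have "u < 2*n" "v < 2*n" by auto
    then show ?thesis
    proof (cases rule: less_double_cases)
      case low
      from \<open>v < 2*n\<close> show ?thesis
        by (cases rule: less_double_cases) (use low low_low low_high in simp_all)
    next
      case (high u')
      from \<open>v < 2*n\<close> show ?thesis
        by (cases rule: less_double_cases) (use high high_low high_high in simp_all)
    qed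
  qed
  ultimately show ?thesis
    unfolding graph_iso_def by blast
qed

lemma block_graph_iso_fixing_half:
  fixes n :: nat and B Q :: "nat \<Rightarrow> nat \<Rightarrow> int"
  defines "E \<equiv> mat_graph (block_mat n B Q (transp_mat Q) B)"
  assumes iso: "graph_iso {0..<2*n} E {0..<2*n} (cross_complement {0..<n} E) h"
    and fixes_low: "h ` {0..<n} = {0..<n}"
  obtains \<sigma> \<tau> where "graph_aut {0..<n} (mat_graph B) \<sigma>" "graph_aut {0..<n} (mat_graph B) \<tau>"
    and "\<And>u v. u < n \<Longrightarrow> v < n \<Longrightarrow> Q (\<sigma> u) (\<tau> v) = 1 \<longleftrightarrow> Q u v \<noteq> 1"
proof -
  let ?E' = "cross_complement {0..<n} E"
  define \<tau> where "\<tau> x = h (x + n) - n" for x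
  have bij: "bij_betw h {0..<2*n} {0..<2*n}"
    and edge: "\<And>u v. u < 2*n \<Longrightarrow> v < 2*n \<Longrightarrow> E u v = ?E' (h u) (h v)"
    using iso unfolding graph_iso_def by auto
  have bij_low: "bij_betw h {0..<n} {0..<n}"
    using bij fixes_low by (auto simp: bij_betw_def intro: inj_on_subset)
  then have low: "h u < n" if "u < n" for u
    using bij_betw_apply that by fastforce
  have "bij_betw h ({0..<2*n} - {0..<n}) ({0..<2*n} - {0..<n})"
    using bij bij_low by (rule bij_betw_DiffI) auto
  then have in_high: "h (x + n) \<in> {0..<2*n} - {0..<n}" if "x < n" for x
    by (rule bij_betw_apply) (use that in simp)
  have high: "h (x + n) = \<tau> x + n" "\<tau> x < n" if "x < n" for x
    using in_high[OF that] unfolding \<tau>_def by auto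
  have "graph_aut {0..<n} (mat_graph B) h"
    unfolding graph_aut_def graph_iso_def
  proof (intro conjI ballI bij_low)
    fix u v assume "u \<in> {0..<n}" "v \<in> {0..<n}"
    with edge[of u v] low[of u] low[of v] show "mat_graph B u v = mat_graph B (h u) (h v)"
      by (auto simp: E_def cross_complement_def mat_graph_def)
  qed
  moreover have "graph_aut {0..<n} (mat_graph B) \<tau>"
    unfolding graph_aut_def graph_iso_def
  proof (intro conjI ballI)
    have "inj_on \<tau> {0..<n}"
    proof (rule inj_onI)
      fix x y assume "x \<in> {0..<n}" "y \<in> {0..<n}" "\<tau> x = \<tau> y"
      with high have "h (x + n) = h (y + n)" by auto
      with bij \<open>x \<in> {0..<n}\<close> \<open>y \<in> {0..<n}\<close> show "x = y"
        by (auto simp: bij_betw_def dest: inj_onD)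
    qed
    moreover have "\<tau> ` {0..<n} = {0..<n}"
      using calculation high by (intro endo_inj_surj) auto
    ultimately show "bij_betw \<tau> {0..<n} {0..<n}"
      by (simp add: bij_betw_def)
    fix u v assume "u \<in> {0..<n}" "v \<in> {0..<n}"
    with edge[of "u + n" "v + n"] high[of u] high[of v]
    show "mat_graph B u v = mat_graph B (\<tau> u) (\<tau> v)"
      by (auto simp: E_def cross_complement_def mat_graph_def)
  qed
  moreover have "Q (h u) (\<tau> v) = 1 \<longleftrightarrow> Q u v \<noteq> 1" if "u < n" "v < n" for u v
    using edge[of u "v + n"] high[of v] low[of u] that
    by (auto simp: E_def cross_complement_def mat_graph_def)
  ultimately show ?thesis
    using that by blast
qed

lemma block_graph_neighbours_in_low_half:
  fixes n :: nat
  assumes "v < n"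
  shows "{y\<in>{0..<n}. mat_graph (block_mat n B Q (transp_mat Q) S) (v + n) y}
           = {y\<in>{0..<n}. Q y v = 1}"
  by (auto simp: mat_graph_def transp_mat_def)

lemma block_graph_halved:
  fixes n :: nat and B Q :: "nat \<Rightarrow> nat \<Rightarrow> int"
  defines "E \<equiv> mat_graph (block_mat n B Q (transp_mat Q) B)"
  assumes col: "\<And>v. v < n \<Longrightarrow> 2 * card {y\<in>{0..<n}. Q y v = 1} = n"
  shows "\<forall>v\<in>{0..<2*n} - {0..<n}. 2 * card {y\<in>{0..<n}. E v y} = card {0..<n}"
proof
  fix v assume "v \<in> {0..<2*n} - {0..<n}"
  then have "v < 2*n" "\<not> v < n" by auto
  then obtain v' where "v' < n" "v = v' + n"
    by (cases rule: less_double_cases) auto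
  then show "2 * card {y\<in>{0..<n}. E v y} = card {0..<n}"
    using block_graph_neighbours_in_low_half[of v' n B Q B] col[of v'] by (simp add: E_def)
qed

lemma block_graph_gm_switching_set:
  fixes n :: nat and B Q :: "nat \<Rightarrow> nat \<Rightarrow> int"
  defines "E \<equiv> mat_graph (block_mat n B Q (transp_mat Q) B)"
  assumes reg: "regular_graph {0..<n} (mat_graph B)"
    and col: "\<And>v. v < n \<Longrightarrow> 2 * card {y\<in>{0..<n}. Q y v = 1} = n"
  shows "gm_switching_set {0..<2*n} E {0..<n}"
proof -
  have "{y\<in>{0..<n}. E x y} = {y\<in>{0..<n}. mat_graph B x y}" if "x \<in> {0..<n}" for x
    using that by (auto simp: E_def mat_graph_def)
  with reg have "regular_graph {0..<n} E"
    unfolding regular_graph_def by auto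
  with block_graph_halved[of n Q B] col show ?thesis
    unfolding gm_switching_set_def E_def by auto
qed

lemma doubled_tournament_no_iso_fixing_half:
  fixes m :: nat and T B :: "nat \<Rightarrow> nat \<Rightarrow> int"
  defines "E \<equiv>
    mat_graph (block_mat (2*m) B (doubled_tournament T) (transp_mat (doubled_tournament T)) B)"
  assumes "1 < m"
    and aut_pairs: "\<And>\<sigma> x. graph_aut {0..<2*m} (mat_graph B) \<sigma> \<Longrightarrow> x < 2*m \<Longrightarrow>
      \<sigma> x div 2 = x div 2"
  shows "\<not> (\<exists>h. graph_iso {0..<2*(2*m)} E {0..<2*(2*m)} (cross_complement {0..<2*m} E) h
               \<and> h ` {0..<2*m} = {0..<2*m})"
proof
  assume "\<exists>h. graph_iso {0..<2*(2*m)} E {0..<2*(2*m)} (cross_complement {0..<2*m} E) h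
               \<and> h ` {0..<2*m} = {0..<2*m}"
  then obtain h where "graph_iso {0..<2*(2*m)} E {0..<2*(2*m)} (cross_complement {0..<2*m} E) h"
    and "h ` {0..<2*m} = {0..<2*m}"
    by blast
  then obtain \<sigma> \<tau> where "graph_aut {0..<2*m} (mat_graph B) \<sigma>" "graph_aut {0..<2*m} (mat_graph B) \<tau>"
    and cross: "\<And>u v. u < 2*m \<Longrightarrow> v < 2*m \<Longrightarrow>
      doubled_tournament T (\<sigma> u) (\<tau> v) = 1 \<longleftrightarrow> doubled_tournament T u v \<noteq> 1"
    unfolding E_def by (rule block_graph_iso_fixing_half) blast
  then have "\<sigma> 0 div 2 = 0" "\<tau> 2 div 2 = 1"
    using aut_pairs \<open>1 < m\<close> by fastforce+
  then have "doubled_tournament T (\<sigma> 0) (\<tau> 2) = doubled_tournament T 0 2"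
    by (auto simp: doubled_tournament_def)
  with cross[of 0 2] \<open>1 < m\<close> show False
    by simp
qed

theorem proposition3p1:
  fixes m :: nat and T B :: "nat \<Rightarrow> nat \<Rightarrow> int" and \<rho> :: "nat \<Rightarrow> nat"
  assumes m_gt: "1 < m"
    and T_tour: "tournament_matrix m T" and T_reg: "regular_matrix m T"
    and B_adj: "adjacency_matrix (2*m) B"
    and H_reg: "regular_graph {0..<2*m} (mat_graph B)"
    and \<rho>_aut: "graph_aut {0..<2*m} (mat_graph B) \<rho>"
    and \<rho>_inv: "\<forall>x<2*m. \<rho> (\<rho> x) = x"
    and \<rho>_fpf: "\<forall>x<2*m. \<rho> x \<noteq> x"
    and orbits: "\<forall>x<2*m. \<forall>y<2*m.
        (\<exists>\<sigma>. graph_aut {0..<2*m} (mat_graph B) \<sigma> \<and> \<sigma> x = y) \<longleftrightarrow> (y = x \<or> y = \<rho> x)"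
    and \<rho>_R: "\<forall>i<2*m. \<forall>j<2*m.
        kron 2 id_mat (\<lambda>i j. all_ones i j - id_mat i j) i j = (if \<rho> i = j then 1 else 0)"
  shows
    "let N = (\<lambda>i j. kron 2 T all_ones i j + id_mat i j);
         A = block_mat (2*m) B N (transp_mat N) B;
         V = {0..<4*m}; X1 = {0..<2*m};
         E = mat_graph A; E' = gm_switch V E X1
     in gm_switching_set V E X1
        \<and> (\<exists>f. graph_iso V E V E' f)
        \<and> \<not> (\<exists>f. graph_iso V E V E' f \<and> f ` X1 = X1)"
proof -
  define N where "N = doubled_tournament T"
  define E where "E = mat_graph (block_mat (2*m) B N (transp_mat N) B)"
  have col: "2 * card {y\<in>{0..<2*m}. N y v = 1} = 2*m" if "v < 2*m" for v
    using card_doubled_tournament_column[OF T_tour T_reg that] by (simp add: N_def)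
  have pair: "\<rho> x div 2 = x div 2" if "x < 2*m" for x
    using \<rho>_R that graph_aut_lessThan[OF \<rho>_aut that] by (rule kron_id_swap_div2)
  have aut_pairs: "\<sigma> x div 2 = x div 2"
    if "graph_aut {0..<2*m} (mat_graph B) \<sigma>" "x < 2*m" for \<sigma> x
    using orbits pair that by (rule graph_aut_preserves_pairs)
  have four: "2*(2*m) = 4*m" by simp
  have halved: "\<forall>v\<in>{0..<4*m} - {0..<2*m}. 2 * card {y\<in>{0..<2*m}. E v y} = card {0..<2*m}"
    using block_graph_halved[of "2*m" N B, OF col] unfolding E_def four .
  have switch: "graph_iso {0..<4*m} E {0..<4*m} (gm_switch {0..<4*m} E {0..<2*m}) f
      = graph_iso {0..<4*m} E {0..<4*m} (cross_complement {0..<2*m} E) f" for f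
    by (intro graph_iso_cong ballI gm_switch_halved[OF halved])
  have swap: "\<forall>u<2*m. \<forall>w<2*m. N u w = 1 \<longleftrightarrow> N (\<rho> w) u \<noteq> 1"
    using doubled_tournament_pair_swap[OF T_tour _ _ pair] \<rho>_fpf unfolding N_def by blast
  have "gm_switching_set {0..<4*m} E {0..<2*m}"
    using block_graph_gm_switching_set[OF H_reg col] unfolding E_def four .
  moreover have "graph_iso {0..<4*m} E {0..<4*m} (cross_complement {0..<2*m} E)
      (\<lambda>x. if x < 2*m then x + 2*m else \<rho> (x - 2*m))"
    using block_graph_cross_complement_iso[OF \<rho>_aut \<rho>_inv swap] unfolding E_def four .
  moreover have "\<not> (\<exists>h. graph_iso {0..<4*m} E {0..<4*m} (cross_complement {0..<2*m} E) h
                      \<and> h ` {0..<2*m} = {0..<2*m})"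
    unfolding E_def N_def four[symmetric] using m_gt aut_pairs
    by (rule doubled_tournament_no_iso_fixing_half)
  ultimately show ?thesis
    unfolding Let_def kron_all_ones_plus_id N_def[symmetric] E_def[symmetric] switch
    by blast
qed

end
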